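(* For all integers $n\geq 1$ and $0\leq k\leq n-1$, $$Q_{n,k}(x,t)=\sum_{T\in \mathcal O_{n+1,k}}x^{\mathrm{young}_T(1)-1}\,t^{\mathrm{eld}(T)}.$$
   Context: Define polynomials $Q_n(x,y,z,t)$ by $Q_1=1$ and $Q_{n+1}=[x+nz+(y+t)(n+y\partial_y)]Q_n$ for $n\ge1$, and define $Q_{n,k}(x,t)$ by $Q_n(x,y,1,t)=\sum_{k=0}^{n-1}Q_{n,k}(x,t)y^k$. All trees are rooted trees whose vertices are labeled by distinct positive integers. A vertex $j$ is a descendant of $i$ if the path from the root to $j$ passes through $i$ (every vertex is a descendant of itself); $\beta_T(i)$ is the smallest descendant of $i$ in $T$. If $j$ is a descendant of $i$ joined to $i$ by an edge, $j$ is a child of $i$ and the edge is written $(i,j)$; two children of the same vertex are brothers. A plane tree is a rooted tree in which the children of each vertex are linearly ordered (left to right). In a plane tree $T$, a vertex $j$ is elder if it has a brother $k$ to its right with $\beta_T(k)<\beta_T(j)$; otherwise $j$ is younger. $\mathrm{eld}_T(v)$ is the number of elder children of $v$, $\mathrm{eld}(T)$ is the total number of elder vertices of $T$, $\deg_T(v)$ is the number of children of $v$, and $\mathrm{young}_T(v)=\deg_T(v)-\mathrm{eld}_T(v)$. An edge $(i,j)$ is proper if $j$ is an elder child of $i$ or $i<\beta_T(j)$; otherwise it is improper. $\mathcal O_{m,k}$ denotes the set of plane trees on vertex set $[m]=\{1,\dots,m\}$ with root $1$ having exactly $k$ improper edges. *)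

theory Defs
  imports Main
begin

text \<open>A polynomial in x,y,z,t with natural-number coefficients is represented by its
coefficient function: P a b c d is the coefficient of x^a y^b z^c t^d.
qstep n P is the coefficient array of [x + n z + (y+t)(n + y d/dy)] P.\<close>

definition qstep :: "nat \<Rightarrow> (nat \<Rightarrow> nat \<Rightarrow> nat \<Rightarrow> nat \<Rightarrow> nat) \<Rightarrow> nat \<Rightarrow> nat \<Rightarrow> nat \<Rightarrow> nat \<Rightarrow> nat" where
  "qstep n P a b c d =
     (if 0 < a then P (a - 1) b c d else 0)
   + (if 0 < c then n * P a b (c - 1) d else 0)
   + (if 0 < b then (n + (b - 1)) * P a (b - 1) c d else 0)
   + (if 0 < d then (n + b) * P a b c (d - 1) else 0)"

fun Q :: "nat \<Rightarrow> nat \<Rightarrow> nat \<Rightarrow> nat \<Rightarrow> nat \<Rightarrow> nat" where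
  "Q 0 = (\<lambda>a b c d. 0)"
| "Q (Suc 0) = (\<lambda>a b c d. if a = 0 \<and> b = 0 \<and> c = 0 \<and> d = 0 then 1 else 0)"
| "Q (Suc (Suc n)) = qstep (Suc n) (Q (Suc n))"

text \<open>Coefficient of x^a t^d in Q_{n,k}(x,t), where Q_n(x,y,1,t) = sum_k Q_{n,k}(x,t) y^k:
sum over the (finite) support in the z-exponent.\<close>

definition Qnk :: "nat \<Rightarrow> nat \<Rightarrow> nat \<Rightarrow> nat \<Rightarrow> nat" where
  "Qnk n k a d = (\<Sum>c \<in> {c. Q n a k c d \<noteq> 0}. Q n a k c d)"

datatype ptree = Node nat "ptree list"

primrec root :: "ptree \<Rightarrow> nat" where
  "root (Node v ts) = v"

primrec kids :: "ptree \<Rightarrow> ptree list" where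
  "kids (Node v ts) = ts"

primrec labels :: "ptree \<Rightarrow> nat list" where
  "labels (Node v ts) = v # concat (map labels ts)"

definition beta :: "ptree \<Rightarrow> nat" where
  "beta T = Min (set (labels T))"

definition elder :: "ptree list \<Rightarrow> nat \<Rightarrow> bool" where
  "elder ts i \<longleftrightarrow> (\<exists>j. i < j \<and> j < length ts \<and> beta (ts ! j) < beta (ts ! i))"

definition eld_children :: "ptree list \<Rightarrow> nat" where
  "eld_children ts = card {i. i < length ts \<and> elder ts i}"

definition young_root :: "ptree \<Rightarrow> nat" where
  "young_root T = length (kids T) - eld_children (kids T)"

primrec eld :: "ptree \<Rightarrow> nat" where
  "eld (Node v ts) = eld_children ts + sum_list (map eld ts)"

primrec improper :: "ptree \<Rightarrow> nat" where
  "improper (Node v ts) =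
     card {i. i < length ts \<and> \<not> elder ts i \<and> \<not> v < beta (ts ! i)}
     + sum_list (map improper ts)"

definition Otrees :: "nat \<Rightarrow> nat \<Rightarrow> ptree set" where
  "Otrees m k = {T. distinct (labels T) \<and> set (labels T) = {1..m} \<and> root T = 1 \<and> improper T = k}"

end

theory Submission
  imports Defs "HOL-Library.Multiset"
begin

text \<open>Both sides satisfy the recurrence
  Q_(n+1) = [x + n z + (y + t)(n + y d/dy)] Q_n, read at z = 1. Every tree on [n+2] with root 1
  arises exactly once from a tree T on [n+1] with root 1 by inserting the maximal label m = n + 2:
  as a new leaf, as a new parent of a non-root vertex, or, for an improper child c of a vertex v,
  by putting m in the place of v and hanging v, together with the children of v right of c,
  just after or just before c. Of these insertions, one adds a younger child of the root, n leave
  all statistics unchanged, n + imp(T) add an improper edge and n + imp(T) add an elder vertex;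
  as imp(T) is the exponent of y, these are the terms x, n z, y (n + y d/dy) and t (n + y d/dy).\<close>

lemma card_less_Suc_conv:
  "card {i. i < Suc n \<and> P i} = (if P 0 then 1 else 0) + card {i. i < n \<and> P (Suc i)}"
proof -
  have parts: "{i. i < Suc n \<and> P i} = {i::nat. i = 0 \<and> P 0} \<union> Suc ` {i. i < n \<and> P (Suc i)}"
    by (auto simp: image_iff less_Suc_eq_0_disj)
  have "card ({i::nat. i = 0 \<and> P 0} \<union> Suc ` {i. i < n \<and> P (Suc i)})
      = card {i::nat. i = 0 \<and> P 0} + card (Suc ` {i. i < n \<and> P (Suc i)})"
    by (subst card_Un_disjoint) (auto intro: finite_subset[of _ "{0}"])
  moreover have "card {i::nat. i = 0 \<and> P 0} = (if P 0 then 1 else 0)"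
    by simp
  ultimately show ?thesis
    by (simp add: parts card_image)
qed

lemma sum_list_map_update:
  fixes f :: "'a \<Rightarrow> 'b::comm_monoid_add"
  assumes "i < length xs"
  shows "sum_list (map f (xs[i := y])) + f (xs ! i) = sum_list (map f xs) + f y"
proof -
  obtain as b bs where xs: "xs = as @ b # bs" and i: "i = length as"
    using id_take_nth_drop[OF assms] assms by (metis length_take min.absorb4)
  show ?thesis
    unfolding xs i by (simp add: ac_simps)
qed

lemma sum_list_map_Suc: "sum_list (map (\<lambda>x. Suc (f x)) xs) = sum_list (map f xs) + length xs"
  by (induction xs) simp_all

lemma sum_nth_eq_sum_list: "(\<Sum>i<length xs. f (xs ! i)) = sum_list (map f xs)"
  by (simp add: sum_list_sum_nth atLeast0LessThan)

lemma card_filter_by_class: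
  assumes "finite A" and "finite C" and "f ` A \<subseteq> C"
  shows "card {x \<in> A. P (f x)} = (\<Sum>c\<in>C. if P c then card {x \<in> A. f x = c} else 0)"
proof -
  have "f ` {x \<in> A. P (f x)} \<subseteq> C"
    using assms(3) by blast
  then have "card {x \<in> A. P (f x)} = (\<Sum>c\<in>C. card {x \<in> {x \<in> A. P (f x)}. f x = c})"
    using sum.group[of "{x \<in> A. P (f x)}" C f "\<lambda>_. 1 :: nat"] assms(1,2) by simp
  also have "\<dots> = (\<Sum>c\<in>C. if P c then card {x \<in> A. f x = c} else 0)"
    by (intro sum.cong) (auto intro: arg_cong[where f = card] simp: card_eq_0_iff)
  finally show ?thesis .
qed

lemma sum_if_eq_card:
  "finite A \<Longrightarrow> (\<Sum>x\<in>A. if P x then c else 0) = c * card {x \<in> A. P x}"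
  by (simp add: sum.inter_filter[symmetric])

section \<open>The coefficient recurrence\<close>

lemma Q_eq_0_if_n_le: "1 \<le> n \<Longrightarrow> n \<le> c \<Longrightarrow> Q n a b c d = 0"
proof (induction n arbitrary: a b c d rule: dec_induct)
  case base
  then show ?case by simp
next
  case (step n)
  have Q_Suc: "Q (Suc n) = qstep n (Q n)"
    using step.hyps by (cases n) auto
  have "Q n a' b' c' d' = 0" if "n \<le> c'" for a' b' c' d'
    using step.IH that by blast
  then show ?case
    using step.prems by (simp add: Q_Suc qstep_def)
qed

lemma Qnk_eq_sum:
  assumes "1 \<le> n"
  shows "Qnk n k a d = (\<Sum>c<n. Q n a k c d)"
proof -
  have "{c. Q n a k c d \<noteq> 0} \<subseteq> {..<n}"
    using Q_eq_0_if_n_le[OF assms] by (force simp: not_less[symmetric])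
  then show ?thesis
    unfolding Qnk_def by (intro sum.mono_neutral_left) auto
qed

lemma Qnk_Suc:
  assumes "1 \<le> n"
  shows "Qnk (Suc n) k a d =
      (if 0 < a then Qnk n k (a - 1) d else 0) + n * Qnk n k a d
    + (if 0 < k then (n + k - 1) * Qnk n (k - 1) a d else 0)
    + (if 0 < d then (n + k) * Qnk n k a (d - 1) else 0)"
proof -
  have Q_Suc: "Q (Suc n) = qstep n (Q n)"
    using assms by (cases n) auto
  have vanish: "Q n a' k' n d' = 0" for a' k' d'
    using assms by (rule Q_eq_0_if_n_le) simp
  have "Qnk (Suc n) k a d = (\<Sum>c<Suc n. qstep n (Q n) a k c d)"
    by (simp add: Qnk_eq_sum Q_Suc)
  also have "\<dots> = (\<Sum>c<Suc n. if 0 < a then Q n (a - 1) k c d else 0)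
      + (\<Sum>c<Suc n. if 0 < c then n * Q n a k (c - 1) d else 0)
      + (\<Sum>c<Suc n. if 0 < k then (n + (k - 1)) * Q n a (k - 1) c d else 0)
      + (\<Sum>c<Suc n. if 0 < d then (n + k) * Q n a k c (d - 1) else 0)"
    unfolding qstep_def by (simp add: sum.distrib)
  also have "(\<Sum>c<Suc n. if 0 < c then n * Q n a k (c - 1) d else 0) = n * Qnk n k a d"
    using assms by (simp add: Qnk_eq_sum sum_distrib_left sum.lessThan_Suc_shift del: sum.lessThan_Suc)
  also have "(\<Sum>c<Suc n. if 0 < a then Q n (a - 1) k c d else 0) = (if 0 < a then Qnk n k (a - 1) d else 0)"
    using assms by (simp add: Qnk_eq_sum vanish)
  also have "(\<Sum>c<Suc n. if 0 < k then (n + (k - 1)) * Q n a (k - 1) c d else 0)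
      = (if 0 < k then (n + k - 1) * Qnk n (k - 1) a d else 0)"
    using assms by (simp add: Qnk_eq_sum vanish sum_distrib_left)
  also have "(\<Sum>c<Suc n. if 0 < d then (n + k) * Q n a k c (d - 1) else 0)
      = (if 0 < d then (n + k) * Qnk n k a (d - 1) else 0)"
    using assms by (simp add: Qnk_eq_sum vanish sum_distrib_left)
  finally show ?thesis .
qed

lemma labels_ne [simp]: "labels T \<noteq> []"
  by (cases T) simp

lemma beta_in: "beta T \<in> set (labels T)"
  unfolding beta_def by (rule Min_in) auto

lemma beta_le: "l \<in> set (labels T) \<Longrightarrow> beta T \<le> l"
  unfolding beta_def by simp

lemma beta_Leaf [simp]: "beta (Node v []) = v"
  by (simp add: beta_def)

lemma beta_Node_le_root: "beta (Node v ts) \<le> v"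
  by (rule beta_le) simp

lemma beta_Node_le_child: "t \<in> set ts \<Longrightarrow> beta (Node v ts) \<le> beta t"
  by (rule beta_le) (use beta_in[of t] in auto)

text \<open>The statistics of a vertex only depend on the sequence of the beta values of its
  children: a child is elder iff a smaller value occurs to its right.\<close>

fun elder_count :: "nat list \<Rightarrow> nat" where
  "elder_count [] = 0"
| "elder_count (b # bs) = (if \<exists>c\<in>set bs. c < b then 1 else 0) + elder_count bs"

fun improper_count :: "nat \<Rightarrow> nat list \<Rightarrow> nat" where
  "improper_count v [] = 0"
| "improper_count v (b # bs) =
     (if (\<forall>c\<in>set bs. \<not> c < b) \<and> \<not> v < b then 1 else 0) + improper_count v bs"

definition improper_children :: "nat \<Rightarrow> ptree list \<Rightarrow> nat set" where
  "improper_children v ts = {i. i < length ts \<and> \<not> elder ts i \<and> \<not> v < beta (ts ! i)}"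

lemma elder_Cons_Suc [simp]: "elder (t # ts) (Suc i) \<longleftrightarrow> elder ts i"
proof
  assume "elder (t # ts) (Suc i)"
  then obtain j where "Suc i < j" "j < Suc (length ts)" "beta ((t # ts) ! j) < beta (ts ! i)"
    unfolding elder_def by auto
  then show "elder ts i"
    unfolding elder_def by (intro exI[of _ "j - 1"]) (cases j, auto)
next
  assume "elder ts i"
  then obtain j where "i < j" "j < length ts" "beta (ts ! j) < beta (ts ! i)"
    unfolding elder_def by blast
  then show "elder (t # ts) (Suc i)"
    unfolding elder_def by (intro exI[of _ "Suc j"]) auto
qed

lemma elder_Cons_0: "elder (t # ts) 0 \<longleftrightarrow> (\<exists>s\<in>set ts. beta s < beta t)"
proof
  assume "elder (t # ts) 0"
  then obtain j where "0 < j" "j < Suc (length ts)" "beta ((t # ts) ! j) < beta t"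
    unfolding elder_def by auto
  then show "\<exists>s\<in>set ts. beta s < beta t"
    by (cases j) auto
next
  assume "\<exists>s\<in>set ts. beta s < beta t"
  then obtain j where "j < length ts" "beta (ts ! j) < beta t"
    by (auto simp: in_set_conv_nth)
  then show "elder (t # ts) 0"
    unfolding elder_def by (intro exI[of _ "Suc j"]) auto
qed

lemma eld_children_eq: "eld_children ts = elder_count (map beta ts)"
proof (induction ts)
  case Nil
  then show ?case by (simp add: eld_children_def)
next
  case (Cons t ts)
  then show ?case
    by (simp add: eld_children_def card_less_Suc_conv elder_Cons_0)
qed

lemma card_improper_children: "card (improper_children v ts) = improper_count v (map beta ts)"
proof (induction ts)
  case Nil
  then show ?case by (simp add: improper_children_def)
next
  case (Cons t ts)
  then show ?case
    by (auto simp: improper_children_def card_less_Suc_conv elder_Cons_0)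
qed

lemma improper_Node:
  "improper (Node v ts) = card (improper_children v ts) + sum_list (map improper ts)"
  by (simp add: improper_children_def)

lemma improper_Node_count:
  "improper (Node v ts) = improper_count v (map beta ts) + sum_list (map improper ts)"
  unfolding improper_Node card_improper_children ..

lemma eld_Node: "eld (Node v ts) = elder_count (map beta ts) + sum_list (map eld ts)"
  by (simp add: eld_children_eq)

lemma young_root_Node: "young_root (Node v ts) = length ts - elder_count (map beta ts)"
  by (simp add: young_root_def eld_children_eq)

declare improper.simps [simp del] eld.simps [simp del]

lemma elder_count_le: "elder_count bs \<le> length bs - 1"
proof (induction bs)
  case (Cons b bs)
  then show ?case by (cases bs) auto
qed simp

lemma young_root_pos:
  assumes "kids T \<noteq> []"
  shows "0 < young_root T"
proof (cases T)
  case (Node v ts)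
  with assms have "0 < length ts"
    by simp
  then have "elder_count (map beta ts) < length ts"
    using elder_count_le[of "map beta ts"] unfolding length_map by linarith
  then show ?thesis
    using Node by (simp add: young_root_Node)
qed

lemma elder_count_insert_max:
  "\<forall>x\<in>set as \<union> set bs. x < b \<Longrightarrow>
    elder_count (as @ b # bs) = elder_count (as @ bs) + (if bs = [] then 0 else 1)"
  by (induction as) (cases bs, auto)

lemma improper_count_insert_max:
  "v < b \<Longrightarrow> \<forall>x\<in>set as \<union> set bs. x < b \<Longrightarrow> improper_count v (as @ b # bs) = improper_count v (as @ bs)"
  by (induction as) auto

text \<open>Entries to the left of a block only see which values the block exceeds.\<close>

lemma elder_count_append_cong:
  assumes "\<And>b. (\<exists>c\<in>set bs. c < b) \<longleftrightarrow> (\<exists>c\<in>set bs'. c < b)"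
  shows "elder_count (as @ bs) + elder_count bs' = elder_count (as @ bs') + elder_count bs"
  using assms by (induction as) auto

lemma improper_count_append_cong:
  assumes "\<And>b. (\<exists>c\<in>set bs. c < b) \<longleftrightarrow> (\<exists>c\<in>set bs'. c < b)"
    and "c \<in> set bs" "c < v" "c < v'"
  shows "improper_count v (as @ bs) + improper_count v' bs'
       = improper_count v' (as @ bs') + improper_count v bs"
proof (induction as)
  case Nil
  then show ?case by simp
next
  case (Cons a as)
  have same_min: "(\<forall>c\<in>set (as @ bs). \<not> c < a) \<longleftrightarrow> (\<forall>c\<in>set (as @ bs'). \<not> c < a)"
    using assms(1)[of a] by auto
  have "\<not> v < a \<and> \<not> v' < a" if "\<forall>x\<in>set (as @ bs). \<not> x < a"
  proof -
    have "a \<le> c"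
      using that assms(2) by (simp add: not_less)
    then show ?thesis
      using assms(3,4) by simp
  qed
  then show ?case
    using Cons same_min by auto
qed

lemma distinct_map_beta: "distinct (concat (map labels ts)) \<Longrightarrow> distinct (map beta ts)"
proof (induction ts)
  case (Cons t ts)
  have "beta t \<noteq> beta s" if "s \<in> set ts" for s
    using Cons.prems that beta_in[of t] beta_in[of s] by auto
  then show ?case
    using Cons by auto
qed simp

lemma beta_child_neq_root: "distinct (labels (Node v ts)) \<Longrightarrow> t \<in> set ts \<Longrightarrow> beta t \<noteq> v"
  using beta_in[of t] by auto

lemma beta_Node_greater:
  assumes "c < v" and "\<forall>r\<in>set R. c < beta r"
  shows "c < beta (Node v R)"
proof -
  have "beta (Node v R) = v \<or> (\<exists>r\<in>set R. beta (Node v R) \<in> set (labels r))"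
    using beta_in[of "Node v R"] by auto
  then show ?thesis
    using assms beta_le by (metis order.strict_trans2)
qed

lemma improper_child_decomp:
  assumes "j \<in> improper_children v cs" and "distinct (labels (Node v cs))"
  obtains P C R where "cs = P @ C # R" "j = length P" "beta C < v" "\<forall>r\<in>set R. beta C < beta r"
proof
  have j: "j < length cs" and not_elder: "\<not> elder cs j" and "\<not> v < beta (cs ! j)"
    using assms(1) by (auto simp: improper_children_def)
  then show "beta (cs ! j) < v"
    using beta_child_neq_root[OF assms(2), of "cs ! j"] by (simp add: nat_neq_iff)
  show "cs = take j cs @ cs ! j # drop (Suc j) cs"
    using j by (rule id_take_nth_drop)
  show "j = length (take j cs)"
    using j by simp
  show "\<forall>r\<in>set (drop (Suc j) cs). beta (cs ! j) < beta r"
  proof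
    fix r
    assume "r \<in> set (drop (Suc j) cs)"
    then obtain i where "i < length cs - Suc j" "r = cs ! (Suc j + i)"
      by (auto simp: in_set_conv_nth)
    then have l: "j < Suc j + i" "Suc j + i < length cs" "r = cs ! (Suc j + i)"
      by auto
    have "distinct (map beta cs)"
      using assms(2) by (simp add: distinct_map_beta)
    then have "beta r \<noteq> beta (cs ! j)"
      using nth_eq_iff_index_eq[of "map beta cs" "Suc j + i" j] l j by simp
    then show "beta (cs ! j) < beta r"
      using not_elder l unfolding elder_def by auto
  qed
qed

lemma length_in_improper_children:
  assumes "beta C < v" and "\<forall>r\<in>set R. beta C < beta r"
  shows "length P \<in> improper_children v (P @ C # R)"
proof -
  have "\<not> beta ((P @ C # R) ! l) < beta C" if "length P < l" "l < length (P @ C # R)" for l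
  proof -
    obtain i where "l = Suc (length P) + i"
      using \<open>length P < l\<close> by (metis less_iff_Suc_add add_Suc)
    then have "(P @ C # R) ! l \<in> set R"
      using that(2) by (simp add: nth_append)
    then show ?thesis
      using assms(2) by auto
  qed
  then show ?thesis
    using assms(1) by (auto simp: improper_children_def elder_def)
qed

definition distinct_below :: "nat \<Rightarrow> ptree \<Rightarrow> bool" where
  "distinct_below m T \<longleftrightarrow> distinct (labels T) \<and> (\<forall>l\<in>set (labels T). l < m)"

lemma distinct_below_beta: "distinct_below m X \<Longrightarrow> beta X < m"
  using beta_in[of X] by (auto simp: distinct_below_def)

lemma distinct_below_child: "distinct_below m (Node v cs) \<Longrightarrow> c \<in> set cs \<Longrightarrow> distinct_below m c"
  by (auto simp: distinct_below_def distinct_concat_iff)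

lemma distinct_labels_child: "distinct (labels (Node v cs)) \<Longrightarrow> c \<in> set cs \<Longrightarrow> distinct (labels c)"
  by (auto simp: distinct_concat_iff)

lemma leaf_max_notin_kids: "distinct_below m (Node v cs) \<Longrightarrow> Node m [] \<notin> set cs"
  by (auto simp: distinct_below_def)

section \<open>Inserting the maximal label\<close>

text \<open>The ways of inserting a new maximal label m at the root v of a tree: as a leaf child at
  position q; as a new root above the tree; or, for an improper child c of v, by letting m take
  the place of v and hanging v, together with the children to the right of c, below m just after c
  (where it is younger) or just before c (where it is elder).\<close>

datatype local_op = New_Leaf nat | New_Root | Split_Young nat | Split_Elder nat

text \<open>An insertion is classified by the monomial of x + n z + (y + t)(n + y d/dy) accounting for
  it: x adds a younger child of the root, z changes no statistic, y adds an improper edge and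
  t adds an elder vertex.\<close>

datatype step = Step_X | Step_Z | Step_Y | Step_T

fun local_insert :: "nat \<Rightarrow> ptree \<Rightarrow> local_op \<Rightarrow> ptree" where
  "local_insert m (Node v cs) (New_Leaf q) = Node v (take q cs @ Node m [] # drop q cs)"
| "local_insert m (Node v cs) New_Root = Node m [Node v cs]"
| "local_insert m (Node v cs) (Split_Young j) = Node m (take (Suc j) cs @ [Node v (drop (Suc j) cs)])"
| "local_insert m (Node v cs) (Split_Elder j) = Node m (take j cs @ [Node v (drop (Suc j) cs), cs ! j])"

fun local_valid :: "ptree \<Rightarrow> local_op \<Rightarrow> bool" where
  "local_valid (Node v cs) (New_Leaf q) \<longleftrightarrow> q \<le> length cs"
| "local_valid (Node v cs) New_Root \<longleftrightarrow> True"
| "local_valid (Node v cs) (Split_Young j) \<longleftrightarrow> j \<in> improper_children v cs"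
| "local_valid (Node v cs) (Split_Elder j) \<longleftrightarrow> j \<in> improper_children v cs"

fun local_step :: "ptree \<Rightarrow> local_op \<Rightarrow> step" where
  "local_step (Node v cs) (New_Leaf q) = (if q = length cs then Step_X else Step_T)"
| "local_step (Node v cs) New_Root = Step_Y"
| "local_step (Node v cs) (Split_Young j) = Step_Y"
| "local_step (Node v cs) (Split_Elder j) = Step_T"

lemma local_insert_split:
  "local_insert m (Node v (P @ C # R)) (Split_Young (length P)) = Node m (P @ [C, Node v R])"
  "local_insert m (Node v (P @ C # R)) (Split_Elder (length P)) = Node m (P @ [Node v R, C])"
  by simp_all

lemma mset_local_insert:
  assumes "local_valid X k"
  shows "mset (labels (local_insert m X k)) = add_mset m (mset (labels X))"
proof (cases X)
  case (Node v cs)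
  show ?thesis
  proof (cases k)
    case (New_Leaf q)
    have "mset (labels X) = add_mset v (mset (concat (map labels (take q cs @ drop q cs))))"
      using Node by simp
    then show ?thesis
      using Node New_Leaf by (simp del: append_take_drop_id)
  next
    case New_Root
    then show ?thesis
      using Node by simp
  next
    case (Split_Young j)
    have "mset (labels X) = add_mset v (mset (concat (map labels (take (Suc j) cs @ drop (Suc j) cs))))"
      using Node by simp
    then show ?thesis
      using Node Split_Young by (simp del: append_take_drop_id)
  next
    case (Split_Elder j)
    then have "j < length cs"
      using assms Node by (simp add: improper_children_def)
    then have "mset (labels X)
        = add_mset v (mset (concat (map labels (take j cs @ cs ! j # drop (Suc j) cs))))"
      using Node id_take_nth_drop[of j cs] by simp
    then show ?thesis
      using Node Split_Elder by (simp add: ac_simps del: append_take_drop_id)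
  qed
qed

lemma new_leaf_stats:
  assumes "q \<le> length cs" and "v < m" and "\<forall>c\<in>set cs. beta c < m"
  defines "X' \<equiv> Node v (take q cs @ Node m [] # drop q cs)"
  shows "improper X' = improper (Node v cs)"
    and "eld X' = eld (Node v cs) + (if q = length cs then 0 else 1)"
    and "young_root X' = young_root (Node v cs) + (if q = length cs then 1 else 0)"
proof -
  let ?bs = "map beta cs"
  have "\<forall>x\<in>set ?bs. x < m"
    using assms(3) by simp
  then have less: "\<forall>x\<in>set (take q ?bs) \<union> set (drop q ?bs). x < m"
    using set_take_subset[of q ?bs] set_drop_subset[of q ?bs] by blast
  have betas: "map beta (take q cs @ Node m [] # drop q cs) = take q ?bs @ m # drop q ?bs"
    by (simp add: take_map drop_map)
  have "drop q ?bs = [] \<longleftrightarrow> q = length cs"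
    using assms(1) by auto
  then have elder: "elder_count (map beta (take q cs @ Node m [] # drop q cs))
      = elder_count ?bs + (if q = length cs then 0 else 1)"
    unfolding betas using elder_count_insert_max[OF less] by simp
  have "sum_list (map f cs) = sum_list (map f (take q cs)) + sum_list (map f (drop q cs))"
    for f :: "ptree \<Rightarrow> nat"
    by (metis append_take_drop_id map_append sum_list_append)
  then have sum: "sum_list (map f (take q cs @ Node m [] # drop q cs)) = sum_list (map f cs) + f (Node m [])"
    for f :: "ptree \<Rightarrow> nat"
    by simp
  show "improper X' = improper (Node v cs)"
    unfolding X'_def improper_Node_count betas sum
    using improper_count_insert_max[OF assms(2) less] by simp
  show "eld X' = eld (Node v cs) + (if q = length cs then 0 else 1)"
    unfolding X'_def eld_Node elder sum by simp
  show "young_root X' = young_root (Node v cs) + (if q = length cs then 1 else 0)"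
    using elder elder_count_le[of ?bs] assms(1) by (simp add: X'_def young_root_Node)
qed

lemma new_root_stats:
  assumes "beta X < m"
  shows "improper (Node m [X]) = Suc (improper X)" and "eld (Node m [X]) = eld X"
  using assms by (simp_all add: improper_Node_count eld_Node)

lemma split_stats:
  assumes "beta C < v" and "\<forall>r\<in>set R. beta C < beta r" and "v < m"
  shows "improper (Node m (P @ [C, Node v R])) = Suc (improper (Node v (P @ C # R)))"
    and "eld (Node m (P @ [C, Node v R])) = eld (Node v (P @ C # R))"
    and "improper (Node m (P @ [Node v R, C])) = improper (Node v (P @ C # R))"
    and "eld (Node m (P @ [Node v R, C])) = Suc (eld (Node v (P @ C # R)))"
proof -
  let ?bP = "map beta P" and ?c = "beta C" and ?w = "beta (Node v R)" and ?bR = "map beta R"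
  have cw: "?c < ?w"
    using assms(1,2) by (rule beta_Node_greater)
  have wm: "?w < m"
    using beta_Node_le_root[of v R] assms(3) by simp
  have same_min: "(\<exists>x\<in>set (?c # ?bR). x < b) \<longleftrightarrow> (\<exists>x\<in>set [?c, ?w]. x < b)"
    "(\<exists>x\<in>set (?c # ?bR). x < b) \<longleftrightarrow> (\<exists>x\<in>set [?w, ?c]. x < b)" for b
    using assms(2) cw by auto
  have elder_C: "elder_count (?c # ?bR) = elder_count ?bR"
    using assms(2) by auto
  have improper_C: "improper_count v (?c # ?bR) = Suc (improper_count v ?bR)"
    using assms(1,2) by auto
  show "improper (Node m (P @ [C, Node v R])) = Suc (improper (Node v (P @ C # R)))"
    using improper_count_append_cong[of "?c # ?bR" "[?c, ?w]" ?c v m ?bP] same_min(1)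
      assms(1,3) cw wm improper_C
    by (simp add: improper_Node_count)
  show "eld (Node m (P @ [C, Node v R])) = eld (Node v (P @ C # R))"
    using elder_count_append_cong[of "?c # ?bR" "[?c, ?w]" ?bP] same_min(1) cw elder_C
    by (simp add: eld_Node)
  show "improper (Node m (P @ [Node v R, C])) = improper (Node v (P @ C # R))"
    using improper_count_append_cong[of "?c # ?bR" "[?w, ?c]" ?c v m ?bP] same_min(2)
      assms(1,3) cw wm improper_C
    by (simp add: improper_Node_count)
  show "eld (Node m (P @ [Node v R, C])) = Suc (eld (Node v (P @ C # R)))"
    using elder_count_append_cong[of "?c # ?bR" "[?w, ?c]" ?bP] same_min(2) cw elder_C
    by (simp add: eld_Node)
qed

lemma local_insert_stats:
  assumes "local_valid X k" and "distinct_below m X"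
  shows "improper (local_insert m X k) = improper X + (if local_step X k = Step_Y then 1 else 0)"
    and "eld (local_insert m X k) = eld X + (if local_step X k = Step_T then 1 else 0)"
proof -
  obtain v cs where X: "X = Node v cs"
    by (cases X)
  have "v < m" and children: "\<forall>c\<in>set cs. beta c < m"
    using assms(2) distinct_below_beta distinct_below_child
    by (auto simp: X distinct_below_def)
  have "improper (local_insert m X k) = improper X + (if local_step X k = Step_Y then 1 else 0)
      \<and> eld (local_insert m X k) = eld X + (if local_step X k = Step_T then 1 else 0)"
  proof (cases k)
    case (New_Leaf q)
    then show ?thesis
      using assms(1) new_leaf_stats[OF _ \<open>v < m\<close> children, of q] by (simp add: X)
  next
    case New_Root
    then show ?thesis
      using new_root_stats distinct_below_beta[OF assms(2)] by (simp add: X)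
  next
    case (Split_Young j)
    with assms X obtain P C R where "cs = P @ C # R" "j = length P"
        "beta C < v" "\<forall>r\<in>set R. beta C < beta r"
      by (auto simp: distinct_below_def elim: improper_child_decomp)
    then show ?thesis
      using split_stats[OF _ _ \<open>v < m\<close>] Split_Young X by (simp only: local_insert_split) simp
  next
    case (Split_Elder j)
    with assms X obtain P C R where "cs = P @ C # R" "j = length P"
        "beta C < v" "\<forall>r\<in>set R. beta C < beta r"
      by (auto simp: distinct_below_def elim: improper_child_decomp)
    then show ?thesis
      using split_stats[OF _ _ \<open>v < m\<close>] Split_Elder X by (simp only: local_insert_split) simp
  qed
  then show "improper (local_insert m X k) = improper X + (if local_step X k = Step_Y then 1 else 0)"
    and "eld (local_insert m X k) = eld X + (if local_step X k = Step_T then 1 else 0)"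
    by simp_all
qed

fun insert_at :: "nat \<Rightarrow> ptree \<Rightarrow> nat list \<Rightarrow> local_op \<Rightarrow> ptree" where
  "insert_at m X [] k = local_insert m X k"
| "insert_at m (Node v cs) (i # p) k = Node v (cs[i := insert_at m (cs ! i) p k])"

fun valid_at :: "ptree \<Rightarrow> nat list \<Rightarrow> local_op \<Rightarrow> bool" where
  "valid_at X [] k \<longleftrightarrow> local_valid X k"
| "valid_at (Node v cs) (i # p) k \<longleftrightarrow> i < length cs \<and> valid_at (cs ! i) p k"

text \<open>A new youngest child of a vertex below the root changes none of the statistics.\<close>

fun step_below :: "step \<Rightarrow> step" where
  "step_below Step_X = Step_Z"
| "step_below s = s"

lemma step_below_eq_iff:
  "step_below s' = s \<longleftrightarrow> s' = s \<and> s \<noteq> Step_X \<or> s' = Step_X \<and> s = Step_Z"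
  by (cases s'; cases s) simp_all

fun step_at :: "ptree \<Rightarrow> nat list \<Rightarrow> local_op \<Rightarrow> step" where
  "step_at X [] k = local_step X k"
| "step_at (Node v cs) (i # p) k = step_below (step_at (cs ! i) p k)"

lemma mset_labels_Node: "mset (labels (Node v cs)) = add_mset v (\<Sum>c\<leftarrow>cs. mset (labels c))"
  by (simp add: mset_concat comp_def)

lemma mset_insert_at:
  "valid_at X p k \<Longrightarrow> mset (labels (insert_at m X p k)) = add_mset m (mset (labels X))"
proof (induction m X p k rule: insert_at.induct)
  case (1 m X k)
  then show ?case
    by (simp add: mset_local_insert)
next
  case (2 m v cs i p k)
  then have "i < length cs" and "valid_at (cs ! i) p k"
    by simp_all
  then show ?case
    using 2 sum_list_map_update[of i cs "\<lambda>c. mset (labels c)" "insert_at m (cs ! i) p k"]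
    by (simp only: mset_labels_Node insert_at.simps) simp
qed

lemma labels_insert_at:
  assumes "valid_at X p k" and "distinct_below m X"
  shows "distinct (labels (insert_at m X p k))"
    and "set (labels (insert_at m X p k)) = insert m (set (labels X))"
proof -
  have "mset (labels (insert_at m X p k)) = mset (m # labels X)"
    using mset_insert_at[OF assms(1)] by simp
  moreover have "distinct (m # labels X)"
    using assms(2) by (auto simp: distinct_below_def)
  ultimately show "distinct (labels (insert_at m X p k))"
    and "set (labels (insert_at m X p k)) = insert m (set (labels X))"
    by (metis mset_eq_imp_distinct_iff, metis list.simps(15) set_mset_mset)
qed

lemma beta_insert_at:
  assumes "valid_at X p k" and "distinct_below m X"
  shows "beta (insert_at m X p k) = beta X"
proof -
  have "beta X < m"
    using assms(2) by (rule distinct_below_beta)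
  then show ?thesis
    unfolding beta_def labels_insert_at(2)[OF assms] by (simp add: Min_insert)
qed

lemma map_beta_update_insert_at:
  assumes "i < length cs" and "valid_at (cs ! i) p k" and "distinct_below m (cs ! i)"
  shows "map beta (cs[i := insert_at m (cs ! i) p k]) = map beta cs"
  using assms beta_insert_at by (simp add: map_update list_update_same_conv)

lemma insert_at_stats:
  assumes "valid_at X p k" and "distinct_below m X"
  shows "improper (insert_at m X p k) = improper X + (if step_at X p k = Step_Y then 1 else 0)"
    and "eld (insert_at m X p k) = eld X + (if step_at X p k = Step_T then 1 else 0)"
proof -
  have "improper (insert_at m X p k) = improper X + (if step_at X p k = Step_Y then 1 else 0)
      \<and> eld (insert_at m X p k) = eld X + (if step_at X p k = Step_T then 1 else 0)"
    using assms
  proof (induction m X p k rule: insert_at.induct)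
    case (1 m X k)
    then show ?case
      by (simp add: local_insert_stats)
  next
    case (2 m v cs i p k)
    let ?Z = "insert_at m (cs ! i) p k"
    have i: "i < length cs" and valid: "valid_at (cs ! i) p k"
      using "2.prems"(1) by simp_all
    have below: "distinct_below m (cs ! i)"
      using "2.prems"(2) i by (auto intro: distinct_below_child)
    have "sum_list (map improper (cs[i := ?Z])) + improper (cs ! i) = sum_list (map improper cs) + improper ?Z"
      and "sum_list (map eld (cs[i := ?Z])) + eld (cs ! i) = sum_list (map eld cs) + eld ?Z"
      using i by (rule sum_list_map_update)+
    then show ?case
      using "2.IH"[OF valid below] map_beta_update_insert_at[OF i valid below]
      by (auto simp: improper_Node_count eld_Node step_below_eq_iff)
  qed
  then show "improper (insert_at m X p k) = improper X + (if step_at X p k = Step_Y then 1 else 0)"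
    and "eld (insert_at m X p k) = eld X + (if step_at X p k = Step_T then 1 else 0)"
    by simp_all
qed

lemma root_insert_at:
  "root (insert_at m X p k) = (if p = [] \<and> (\<forall>q. k \<noteq> New_Leaf q) then m else root X)"
  by (cases p; cases X; cases k) simp_all

lemma young_root_insert_at:
  assumes "valid_at X p k" and "distinct_below m X" and "root (insert_at m X p k) = root X"
  shows "young_root (insert_at m X p k) = young_root X + (if step_at X p k = Step_X then 1 else 0)"
proof -
  obtain v cs where X: "X = Node v cs"
    by (cases X)
  have "v < m" and "\<forall>c\<in>set cs. beta c < m"
    using assms(2) distinct_below_beta distinct_below_child by (auto simp: X distinct_below_def)
  show ?thesis
  proof (cases p)
    case Nil
    then obtain q where "k = New_Leaf q"
      using assms(3) \<open>v < m\<close> by (cases k) (auto simp: X root_insert_at)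
    then show ?thesis
      using Nil assms(1) X new_leaf_stats(3)[OF _ \<open>v < m\<close> \<open>\<forall>c\<in>set cs. beta c < m\<close>]
      by auto
  next
    case (Cons i p')
    then have "i < length cs" and "valid_at (cs ! i) p' k" and "distinct_below m (cs ! i)"
      using assms(1,2) X by (auto intro: distinct_below_child)
    then show ?thesis
      using Cons X map_beta_update_insert_at by (auto simp: young_root_Node step_below_eq_iff)
  qed
qed

definition local_delete :: "nat \<Rightarrow> ptree \<Rightarrow> ptree \<times> local_op" where
  "local_delete m Y =
    (if root Y \<noteq> m then
       (Node (root Y) (filter (\<lambda>c. c \<noteq> Node m []) (kids Y)),
        New_Leaf (length (takeWhile (\<lambda>c. c \<noteq> Node m []) (kids Y))))
     else if length (kids Y) = 1 then (hd (kids Y), New_Root)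
     else
       (let P = butlast (butlast (kids Y)); a = last (butlast (kids Y)); b = last (kids Y) in
        if beta a < beta b then (Node (root b) (P @ a # kids b), Split_Young (length P))
        else (Node (root a) (P @ b # kids a), Split_Elder (length P))))"

lemma local_delete_insert:
  assumes "local_valid X k" and "distinct_below m X"
  shows "local_delete m (local_insert m X k) = (X, k)"
proof -
  obtain v cs where X: "X = Node v cs"
    by (cases X)
  have "v < m"
    using assms(2) by (simp add: X distinct_below_def)
  show ?thesis
  proof (cases k)
    case (New_Leaf q)
    have "\<forall>c\<in>set cs. c \<noteq> Node m []"
      using leaf_max_notin_kids assms(2) X by blast
    then have "\<forall>c\<in>set (take q cs). c \<noteq> Node m []" and "\<forall>c\<in>set (drop q cs). c \<noteq> Node m []"
      by (auto dest: in_set_takeD in_set_dropD)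
    then show ?thesis
      using New_Leaf assms(1) \<open>v < m\<close> X
      by (simp add: local_delete_def takeWhile_append2 min_absorb2 filter_True)
  next
    case New_Root
    then show ?thesis
      by (simp add: X local_delete_def)
  next
    case (Split_Young j)
    with assms X obtain P C R where "cs = P @ C # R" "j = length P"
        "beta C < v" "\<forall>r\<in>set R. beta C < beta r"
      by (auto simp: distinct_below_def elim: improper_child_decomp)
    moreover from this have "beta C < beta (Node v R)"
      by (simp add: beta_Node_greater)
    ultimately show ?thesis
      using Split_Young X by (simp add: local_insert_split local_delete_def butlast_append Let_def)
  next
    case (Split_Elder j)
    with assms X obtain P C R where "cs = P @ C # R" "j = length P"
        "beta C < v" "\<forall>r\<in>set R. beta C < beta r"
      by (auto simp: distinct_below_def elim: improper_child_decomp)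
    moreover from this have "beta C < beta (Node v R)"
      by (simp add: beta_Node_greater)
    ultimately show ?thesis
      using Split_Elder X by (simp add: local_insert_split local_delete_def butlast_append Let_def)
  qed
qed

lemma local_insert_inj:
  assumes "local_valid X k" "local_valid X' k'" "distinct_below m X" "distinct_below m X'"
    and "local_insert m X k = local_insert m X' k'"
  shows "X = X' \<and> k = k'"
proof -
  have "(X, k) = (X', k')"
    using local_delete_insert[OF assms(1,3)] local_delete_insert[OF assms(2,4)] assms(5) by metis
  then show ?thesis
    by simp
qed

definition max_at_root :: "nat \<Rightarrow> ptree \<Rightarrow> bool" where
  "max_at_root m Y \<longleftrightarrow> root Y = m \<or> Node m [] \<in> set (kids Y)"

lemma local_delete_leaf:
  assumes "distinct (labels (Node v ss))" and "v \<noteq> m" and "Node m [] \<in> set ss"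
  obtains A B where "ss = A @ Node m [] # B"
    and "local_delete m (Node v ss) = (Node v (A @ B), New_Leaf (length A))"
proof -
  obtain A B where ss: "ss = A @ Node m [] # B" and "Node m [] \<notin> set A"
    using assms(3) by (auto dest: split_list_first)
  moreover have "m \<notin> set (concat (map labels B))"
    using assms(1) by (simp add: ss)
  then have "Node m [] \<notin> set B"
    by auto
  ultimately have "\<forall>c\<in>set A. c \<noteq> Node m []" and "\<forall>c\<in>set B. c \<noteq> Node m []"
    by blast+
  with that ss assms(2) show ?thesis
    by (simp add: local_delete_def takeWhile_append2 filter_True)
qed

lemma local_delete_split:
  assumes "distinct (map beta (P @ [a, b]))" and "local_delete m (Node m (P @ [a, b])) = (X, k)"
  shows "local_valid X k \<and> local_insert m X k = Node m (P @ [a, b])"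
proof (cases "beta a < beta b")
  case True
  obtain w K where b: "b = Node w K"
    by (cases b)
  have "beta a < w" and "\<forall>r\<in>set K. beta a < beta r"
    using True beta_Node_le_root[of w K] beta_Node_le_child[of _ K w]
    by (auto simp: b intro: less_le_trans)
  then have "local_valid (Node w (P @ a # K)) (Split_Young (length P))"
    by (simp add: length_in_improper_children)
  moreover have "local_delete m (Node m (P @ [a, b])) = (Node w (P @ a # K), Split_Young (length P))"
    using True by (simp add: b local_delete_def butlast_append)
  ultimately show ?thesis
    using assms(2) local_insert_split(1)[of m w P a K] by (auto simp: b)
next
  case False
  with assms(1) have less: "beta b < beta a"
    by simp
  obtain w K where a: "a = Node w K"
    by (cases a)
  have "beta b < w" and "\<forall>r\<in>set K. beta b < beta r"
    using less beta_Node_le_root[of w K] beta_Node_le_child[of _ K w]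
    by (auto simp: a intro: less_le_trans)
  then have "local_valid (Node w (P @ b # K)) (Split_Elder (length P))"
    by (simp add: length_in_improper_children)
  moreover have "local_delete m (Node m (P @ [a, b])) = (Node w (P @ b # K), Split_Elder (length P))"
    using False by (simp add: a local_delete_def butlast_append)
  ultimately show ?thesis
    using assms(2) local_insert_split(2)[of m w P b K] by (auto simp: a)
qed

lemma local_insert_delete:
  assumes "distinct (labels Y)" and "max_at_root m Y" and "Y \<noteq> Node m []"
    and "local_delete m Y = (X, k)"
  shows "local_valid X k \<and> local_insert m X k = Y"
proof -
  obtain v ss where Y: "Y = Node v ss"
    by (cases Y)
  show ?thesis
  proof (cases "v = m")
    case False
    then have "Node m [] \<in> set ss"
      using assms(2) by (simp add: Y max_at_root_def)
    with assms(1) False obtain A B where "ss = A @ Node m [] # B"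
        and "local_delete m Y = (Node v (A @ B), New_Leaf (length A))"
      unfolding Y by (rule local_delete_leaf)
    then show ?thesis
      using assms(4) by (auto simp: Y)
  next
    case True
    then have "ss \<noteq> []"
      using assms(3) Y by blast
    then obtain ss' b where ss': "ss = ss' @ [b]"
      by (cases ss rule: rev_cases) auto
    show ?thesis
    proof (cases ss' rule: rev_cases)
      case Nil
      then show ?thesis
        using assms(4) True ss' by (cases b) (auto simp: Y local_delete_def)
    next
      case (snoc P a)
      then have ss: "ss = P @ [a, b]"
        using ss' by simp
      have "distinct (map beta ss)"
        using assms(1) by (simp add: Y distinct_map_beta)
      then show ?thesis
        using local_delete_split assms(4) True by (simp add: Y ss)
    qed
  qed
qed

lemma length_labels_insert_at:
  assumes "valid_at X p k"
  shows "length (labels (insert_at m X p k)) = Suc (length (labels X))"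
proof -
  have "size (mset (labels (insert_at m X p k))) = size (add_mset m (mset (labels X)))"
    using mset_insert_at[OF assms] by (rule arg_cong)
  then show ?thesis
    by simp
qed

lemma max_at_root_insert_at:
  assumes "valid_at X p k" and "distinct_below m X"
  shows "max_at_root m (insert_at m X p k) \<longleftrightarrow> p = []"
proof (cases p)
  case Nil
  then show ?thesis
    using assms(1) by (cases X; cases k) (auto simp: max_at_root_def)
next
  case (Cons i p')
  obtain v cs where X: "X = Node v cs"
    by (cases X)
  let ?Z = "insert_at m (cs ! i) p' k"
  have "valid_at (cs ! i) p' k"
    using assms(1) by (simp add: X Cons)
  then have "?Z \<noteq> Node m []"
    using length_labels_insert_at[of "cs ! i" p' k m] by (cases "cs ! i") auto
  moreover have "Node m [] \<notin> set cs"
    using leaf_max_notin_kids assms(2) X by blast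
  ultimately have "Node m [] \<notin> set (cs[i := ?Z])"
    using set_update_subset_insert[of cs i ?Z] by auto
  moreover have "v \<noteq> m"
    using assms(2) by (simp add: X distinct_below_def)
  ultimately show ?thesis
    by (simp add: X Cons max_at_root_def)
qed

lemma max_in_labels_update_insert_at:
  assumes "i < length cs" and "valid_at (cs ! i) p k" and "distinct_below m (Node v cs)"
    and "j < length cs"
  shows "m \<in> set (labels (cs[i := insert_at m (cs ! i) p k] ! j)) \<longleftrightarrow> j = i"
proof (cases "j = i")
  case True
  then show ?thesis
    using assms(1) arg_cong[OF mset_insert_at[OF assms(2), of m], of set_mset] by simp
next
  case False
  have "distinct_below m (cs ! j)"
    using assms(3,4) by (simp add: distinct_below_child)
  then show ?thesis
    using False by (auto simp: distinct_below_def)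
qed

lemma insert_at_inj:
  assumes "valid_at X p k" "valid_at X' p' k'" "distinct_below m X" "distinct_below m X'"
    and "insert_at m X p k = insert_at m X' p' k'"
  shows "X = X' \<and> p = p' \<and> k = k'"
  using assms
proof (induction p arbitrary: X X' p')
  case Nil
  then have "p' = []"
    using max_at_root_insert_at by metis
  then show ?case
    using Nil local_insert_inj by simp
next
  case (Cons i p)
  then obtain i' q where p': "p' = i' # q"
    using max_at_root_insert_at by (metis list.distinct(1) neq_Nil_conv)
  obtain v cs where X: "X = Node v cs"
    by (cases X)
  obtain v' cs' where X': "X' = Node v' cs'"
    by (cases X')
  let ?Z = "insert_at m (cs ! i) p k" and ?Z' = "insert_at m (cs' ! i') q k'"
  have i: "i < length cs" and valid: "valid_at (cs ! i) p k"
    using Cons.prems(1) by (simp_all add: X)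
  have i': "i' < length cs'" and valid': "valid_at (cs' ! i') q k'"
    using Cons.prems(2) by (simp_all add: X' p')
  have below: "distinct_below m (cs ! i)" "distinct_below m (cs' ! i')"
    using Cons.prems(3,4) i i' by (auto simp: X X' intro: distinct_below_child)
  have eq: "v = v'" "cs[i := ?Z] = cs'[i' := ?Z']"
    using Cons.prems(5) by (simp_all add: X X' p')
  have "i < length cs'"
    using arg_cong[OF eq(2), of length] i by simp
  moreover have "m \<in> set (labels (cs'[i' := ?Z'] ! i))"
    using max_in_labels_update_insert_at[OF i valid Cons.prems(3)[unfolded X] i] eq(2) by simp
  ultimately have "i = i'"
    using max_in_labels_update_insert_at[OF i' valid' Cons.prems(4)[unfolded X']] by simp
  then have "?Z = ?Z'"
    using arg_cong[OF eq(2), of "\<lambda>l. l ! i"] i i' by simp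
  then have "cs ! i = cs' ! i'" "p = q" "k = k'"
    using Cons.IH[OF valid valid' below] by simp_all
  moreover have "cs = cs'"
    using eq(2) \<open>i = i'\<close> \<open>cs ! i = cs' ! i'\<close> by (metis list_update_id list_update_overwrite)
  ultimately show ?case
    using eq(1) \<open>i = i'\<close> by (simp add: X X' p')
qed

lemma insert_at_surj:
  "distinct (labels Y) \<Longrightarrow> m \<in> set (labels Y) \<Longrightarrow> Y \<noteq> Node m []
    \<Longrightarrow> \<exists>X p k. valid_at X p k \<and> insert_at m X p k = Y"
proof (induction Y)
  case (Node v ss)
  show ?case
  proof (cases "max_at_root m (Node v ss)")
    case True
    obtain X k where "local_delete m (Node v ss) = (X, k)"
      by fastforce
    then show ?thesis
      using local_insert_delete[OF Node.prems(1) True Node.prems(3)] valid_at.simps(1)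
        insert_at.simps(1) by metis
  next
    case False
    then have "v \<noteq> m"
      by (simp add: max_at_root_def)
    then obtain s where "s \<in> set ss" "m \<in> set (labels s)"
      using Node.prems(2) by auto
    then obtain i where i: "i < length ss" "m \<in> set (labels (ss ! i))"
      by (metis in_set_conv_nth)
    have "ss ! i \<noteq> Node m []"
      using False nth_mem[OF i(1)] by (auto simp: max_at_root_def)
    moreover have "distinct (labels (ss ! i))"
      using Node.prems(1) i(1) by (simp add: distinct_labels_child)
    ultimately obtain X p k where "valid_at X p k" "insert_at m X p k = ss ! i"
      using Node.IH[of "ss ! i"] i by auto
    then have "valid_at (Node v (ss[i := X])) (i # p) k"
      and "insert_at m (Node v (ss[i := X])) (i # p) k = Node v ss"
      using i(1) by simp_all
    then show ?thesis
      by blast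
  qed
qed

lemma valid_at_Node_conv:
  "{(p, k). valid_at (Node v cs) p k \<and> P p k} =
     (\<lambda>k. ([], k)) ` {k. local_valid (Node v cs) k \<and> P [] k}
     \<union> (\<Union>i<length cs. (\<lambda>(p, k). (i # p, k)) ` {(p, k). valid_at (cs ! i) p k \<and> P (i # p) k})"
proof (rule set_eqI)
  fix x :: "nat list \<times> local_op"
  obtain p k where x: "x = (p, k)"
    by (cases x)
  show "x \<in> {(p, k). valid_at (Node v cs) p k \<and> P p k} \<longleftrightarrow>
    x \<in> (\<lambda>k. ([], k)) ` {k. local_valid (Node v cs) k \<and> P [] k}
      \<union> (\<Union>i<length cs. (\<lambda>(p, k). (i # p, k)) ` {(p, k). valid_at (cs ! i) p k \<and> P (i # p) k})"
    unfolding x by (cases p) (auto simp: image_iff)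
qed

lemma finite_local_valid: "finite {k. local_valid X k \<and> P k}"
proof -
  obtain v cs where X: "X = Node v cs"
    by (cases X)
  have "{k. local_valid X k \<and> P k} \<subseteq> New_Leaf ` {..length cs} \<union> {New_Root}
      \<union> Split_Young ` improper_children v cs \<union> Split_Elder ` improper_children v cs"
    by (auto simp: X elim!: local_valid.elims)
  moreover have "finite (improper_children v cs)"
    by (simp add: improper_children_def)
  then have "finite (New_Leaf ` {..length cs} \<union> {New_Root}
      \<union> Split_Young ` improper_children v cs \<union> Split_Elder ` improper_children v cs)"
    by simp
  ultimately show ?thesis
    by (rule finite_subset)
qed

lemma finite_valid_at: "finite {(p, k). valid_at X p k \<and> P p k}"
proof (induction X arbitrary: P)
  case (Node v cs)
  have "finite {(p, k). valid_at (cs ! i) p k \<and> P (i # p) k}" if "i < length cs" for i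
    using Node.IH[OF nth_mem[OF that], of "\<lambda>p k. P (i # p) k"] by simp
  then show ?case
    unfolding valid_at_Node_conv by (simp add: finite_local_valid)
qed

lemma card_valid_at_Node:
  "card {(p, k). valid_at (Node v cs) p k \<and> P p k} =
     card {k. local_valid (Node v cs) k \<and> P [] k}
     + (\<Sum>i<length cs. card {(p, k). valid_at (cs ! i) p k \<and> P (i # p) k})"
proof -
  let ?L = "(\<lambda>k. ([] :: nat list, k)) ` {k. local_valid (Node v cs) k \<and> P [] k}"
  let ?C = "\<lambda>i. (\<lambda>(p, k). (i # p, k)) ` {(p, k). valid_at (cs ! i) p k \<and> P (i # p) k}"
  have "card (?L \<union> (\<Union>i<length cs. ?C i)) = card ?L + card (\<Union>i<length cs. ?C i)"
    by (subst card_Un_disjoint) (auto simp: finite_local_valid finite_valid_at)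
  also have "card (\<Union>i<length cs. ?C i) = (\<Sum>i<length cs. card (?C i))"
    by (subst card_UN_disjoint) (auto simp: finite_valid_at)
  finally show ?thesis
    unfolding valid_at_Node_conv by (simp add: card_image inj_on_def)
qed

definition step_count :: "ptree \<Rightarrow> step \<Rightarrow> nat" where
  "step_count X s = card {(p, k). valid_at X p k \<and> step_at X p k = s}"

lemma step_count_Node:
  "step_count (Node v cs) s =
     card {k. local_valid (Node v cs) k \<and> local_step (Node v cs) k = s}
     + (\<Sum>c\<leftarrow>cs. card {(p, k). valid_at c p k \<and> step_below (step_at c p k) = s})"
  unfolding step_count_def card_valid_at_Node
  by (simp add: sum_nth_eq_sum_list[where f = "\<lambda>c. card {(p, k). valid_at c p k \<and> step_below (step_at c p k) = s}"])

lemma local_steps: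
  "{k. local_valid (Node v cs) k \<and> local_step (Node v cs) k = Step_X} = {New_Leaf (length cs)}"
  "{k. local_valid (Node v cs) k \<and> local_step (Node v cs) k = Step_Z} = {}"
  "{k. local_valid (Node v cs) k \<and> local_step (Node v cs) k = Step_Y}
     = insert New_Root (Split_Young ` improper_children v cs)"
  "{k. local_valid (Node v cs) k \<and> local_step (Node v cs) k = Step_T}
     = New_Leaf ` {..<length cs} \<union> Split_Elder ` improper_children v cs"
  by (rule set_eqI; case_tac x; auto)+

lemma card_step_below:
  "card {(p, k). valid_at X p k \<and> step_below (step_at X p k) = s} =
     (if s = Step_X then 0
      else if s = Step_Z then step_count X Step_X + step_count X Step_Z
      else step_count X s)"
proof -
  have "{(p, k). valid_at X p k \<and> step_below (step_at X p k) = s} =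
      (if s = Step_Z then {(p, k). valid_at X p k \<and> step_at X p k = Step_X} else {})
      \<union> (if s = Step_X then {} else {(p, k). valid_at X p k \<and> step_at X p k = s})"
    by (auto simp: step_below_eq_iff)
  then show ?thesis
    unfolding step_count_def by (simp add: card_Un_disjoint finite_valid_at disjoint_iff)
qed

lemma step_count_values:
  "step_count X Step_X = 1 \<and> step_count X Step_Z + 1 = length (labels X)
    \<and> step_count X Step_Y = length (labels X) + improper X
    \<and> step_count X Step_T + 1 = length (labels X) + improper X"
proof (induction X)
  case (Node v cs)
  let ?len = "\<lambda>c. length (labels c)"
  have IH: "step_count c Step_X = 1" "step_count c Step_Z + 1 = ?len c"
    "step_count c Step_Y = ?len c + improper c" "step_count c Step_T + 1 = ?len c + improper c"
    if "c \<in> set cs" for c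
    using Node.IH[OF that] by simp_all
  have len: "length (labels (Node v cs)) = Suc (sum_list (map ?len cs))"
    by (simp add: length_concat comp_def)
  have Z: "sum_list (map (\<lambda>c. step_count c Step_X + step_count c Step_Z) cs) = sum_list (map ?len cs)"
    using IH(1,2) by (simp cong: map_cong)
  have Y: "sum_list (map (\<lambda>c. step_count c Step_Y) cs) = sum_list (map ?len cs) + sum_list (map improper cs)"
    using IH(3) by (simp add: sum_list_addf cong: map_cong)
  have "sum_list (map (\<lambda>c. Suc (step_count c Step_T)) cs) = sum_list (map (\<lambda>c. ?len c + improper c) cs)"
    using IH(4) by (simp cong: map_cong)
  then have T: "sum_list (map (\<lambda>c. step_count c Step_T) cs) + length cs
      = sum_list (map ?len cs) + sum_list (map improper cs)"
    by (simp add: sum_list_map_Suc sum_list_addf)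
  have imp_fin: "finite (improper_children v cs)"
    by (simp add: improper_children_def)
  have "card (insert New_Root (Split_Young ` improper_children v cs)) = Suc (card (improper_children v cs))"
    using imp_fin by (subst card_insert_disjoint) (auto simp: card_image inj_on_def)
  moreover have "card (New_Leaf ` {..<length cs} \<union> Split_Elder ` improper_children v cs)
      = length cs + card (improper_children v cs)"
    using imp_fin by (subst card_Un_disjoint) (auto simp: card_image inj_on_def)
  ultimately show ?case
    unfolding step_count_Node card_step_below local_steps len improper_Node
    using Z Y T by (simp add: IH(1) cong: map_cong)
qed

section \<open>The recurrence for O-trees\<close>

definition rooted_trees :: "nat \<Rightarrow> ptree set" where
  "rooted_trees N = {T. distinct (labels T) \<and> set (labels T) = {1..N} \<and> root T = 1}"

text \<open>Only New_Root has to be excluded at the root: the root 1 has no improper children, so no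
  split is valid there.\<close>

definition root_insertions :: "ptree \<Rightarrow> (nat list \<times> local_op) set" where
  "root_insertions T = {(p, k). valid_at T p k \<and> (p, k) \<noteq> ([], New_Root)}"

lemma rooted_trees_distinct_below: "T \<in> rooted_trees N \<Longrightarrow> distinct_below (Suc N) T"
  by (auto simp: rooted_trees_def distinct_below_def)

lemma rooted_trees_length: "T \<in> rooted_trees N \<Longrightarrow> length (labels T) = N"
  by (auto simp: rooted_trees_def dest: distinct_card)

lemma rooted_trees_improper_children:
  assumes "Node v cs \<in> rooted_trees N"
  shows "improper_children v cs = {}"
proof -
  have "1 < beta c" if "c \<in> set cs" for c
  proof -
    have "beta c \<in> set (labels (Node v cs))" and "beta c \<noteq> v"
      using that beta_in[of c] assms by (auto simp: rooted_trees_def)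
    then show ?thesis
      using assms by (auto simp: rooted_trees_def)
  qed
  then show ?thesis
    using assms by (auto simp: improper_children_def rooted_trees_def)
qed

lemma root_insertion_preserves_root:
  assumes "T \<in> rooted_trees N" and "(p, k) \<in> root_insertions T"
  shows "root (insert_at m T p k) = 1"
proof -
  obtain v cs where T: "T = Node v cs"
    by (cases T)
  have "improper_children v cs = {}"
    using assms(1) T by (simp add: rooted_trees_improper_children)
  then have "p \<noteq> [] \<or> (\<exists>q. k = New_Leaf q)"
    using assms(2) T by (cases k) (auto simp: root_insertions_def)
  then show ?thesis
    using assms(1) by (auto simp: root_insert_at rooted_trees_def)
qed

lemma insert_at_in_rooted_trees:
  assumes "T \<in> rooted_trees (Suc n)" and "(p, k) \<in> root_insertions T"
  shows "insert_at (Suc (Suc n)) T p k \<in> rooted_trees (Suc (Suc n))"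
proof -
  have "valid_at T p k"
    using assms(2) by (simp add: root_insertions_def)
  note labels = labels_insert_at[OF this rooted_trees_distinct_below[OF assms(1)]]
  show ?thesis
    using labels root_insertion_preserves_root[OF assms] assms(1)
    by (simp add: rooted_trees_def atLeastAtMostSuc_conv)
qed

lemma labels_insert_atD:
  assumes "valid_at X p k" and "distinct (labels (insert_at m X p k))"
  shows "distinct (labels X)" and "set (labels X) = set (labels (insert_at m X p k)) - {m}"
proof -
  have "mset (labels (insert_at m X p k)) = mset (m # labels X)"
    using mset_insert_at[OF assms(1)] by simp
  then have "distinct (m # labels X)" and "set (labels (insert_at m X p k)) = set (m # labels X)"
    using assms(2) by (metis mset_eq_imp_distinct_iff, metis set_mset_mset)
  then show "distinct (labels X)" and "set (labels X) = set (labels (insert_at m X p k)) - {m}"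
    by auto
qed

lemma rooted_trees_Suc_cases:
  assumes Y: "Y \<in> rooted_trees (Suc (Suc n))"
  obtains T p k where "T \<in> rooted_trees (Suc n)" "(p, k) \<in> root_insertions T"
    "insert_at (Suc (Suc n)) T p k = Y"
proof -
  let ?m = "Suc (Suc n)"
  have "?m \<in> set (labels Y)" "Y \<noteq> Node ?m []" "distinct (labels Y)"
    using Y by (auto simp: rooted_trees_def)
  then obtain X p k where valid: "valid_at X p k" and ins: "insert_at ?m X p k = Y"
    using insert_at_surj by blast
  have "{1..?m} - {?m} = {1..Suc n}"
    by auto
  then have "distinct (labels X)" and "set (labels X) = {1..Suc n}"
    using labels_insert_atD[OF valid, of ?m] Y by (simp_all add: ins rooted_trees_def)
  moreover have "root X = 1" and "(p, k) \<noteq> ([], New_Root)"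
    using Y root_insert_at[of ?m X p k] by (auto simp: ins rooted_trees_def split: if_splits)
  ultimately show ?thesis
    using valid ins by (intro that[of X p k]) (simp_all add: rooted_trees_def root_insertions_def)
qed

lemma insert_at_bij_betw:
  "bij_betw (\<lambda>(T, p, k). insert_at (Suc (Suc n)) T p k)
     (SIGMA T : rooted_trees (Suc n). root_insertions T) (rooted_trees (Suc (Suc n)))"
proof (rule bij_betw_imageI)
  show "inj_on (\<lambda>(T, p, k). insert_at (Suc (Suc n)) T p k) (SIGMA T : rooted_trees (Suc n). root_insertions T)"
  proof (rule inj_onI)
    fix x y
    assume x: "x \<in> (SIGMA T : rooted_trees (Suc n). root_insertions T)"
      and y: "y \<in> (SIGMA T : rooted_trees (Suc n). root_insertions T)"
      and eq: "(\<lambda>(T, p, k). insert_at (Suc (Suc n)) T p k) x = (\<lambda>(T, p, k). insert_at (Suc (Suc n)) T p k) y"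
    obtain T p k T' p' k' where "x = (T, p, k)" "y = (T', p', k')"
      by (cases x, cases y) auto
    with x y eq show "x = y"
      using insert_at_inj[of T p k T' p' k' "Suc (Suc n)"]
      by (simp add: root_insertions_def rooted_trees_distinct_below)
  qed
  show "(\<lambda>(T, p, k). insert_at (Suc (Suc n)) T p k) ` (SIGMA T : rooted_trees (Suc n). root_insertions T)
      = rooted_trees (Suc (Suc n))"
    using insert_at_in_rooted_trees by (auto elim!: rooted_trees_Suc_cases intro!: image_eqI)
qed

lemma rooted_trees_1: "rooted_trees (Suc 0) = {Node 1 []}"
proof (intro equalityI subsetI)
  fix T
  assume T: "T \<in> rooted_trees (Suc 0)"
  obtain v cs where T_def: "T = Node v cs"
    by (cases T)
  have "length (labels T) = Suc 0"
    using T by (rule rooted_trees_length)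
  then have "cs = []"
    by (cases cs) (auto simp: T_def)
  then show "T \<in> {Node 1 []}"
    using T by (simp add: T_def rooted_trees_def)
qed (simp add: rooted_trees_def)

lemma finite_root_insertions: "finite (root_insertions T)"
  unfolding root_insertions_def using finite_valid_at[of T "\<lambda>p k. (p, k) \<noteq> ([], New_Root)"]
  by simp

lemma finite_rooted_trees: "finite (rooted_trees (Suc n))"
proof (induction n)
  case 0
  then show ?case
    by (simp add: rooted_trees_1)
next
  case (Suc n)
  then show ?case
    using bij_betw_finite[OF insert_at_bij_betw] finite_root_insertions by blast
qed

definition tree_stats :: "ptree \<Rightarrow> nat \<times> nat \<times> nat" where
  "tree_stats T = (improper T, young_root T, eld T)"

fun step_shift :: "step \<Rightarrow> nat \<times> nat \<times> nat \<Rightarrow> nat \<times> nat \<times> nat" where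
  "step_shift Step_X (i, y, e) = (i, Suc y, e)"
| "step_shift Step_Z t = t"
| "step_shift Step_Y (i, y, e) = (Suc i, y, e)"
| "step_shift Step_T (i, y, e) = (i, y, Suc e)"

lemma tree_stats_insert_at:
  assumes "T \<in> rooted_trees (Suc n)" and "(p, k) \<in> root_insertions T"
  shows "tree_stats (insert_at (Suc (Suc n)) T p k) = step_shift (step_at T p k) (tree_stats T)"
proof -
  have valid: "valid_at T p k"
    using assms(2) by (simp add: root_insertions_def)
  have below: "distinct_below (Suc (Suc n)) T"
    using assms(1) by (rule rooted_trees_distinct_below)
  have "root (insert_at (Suc (Suc n)) T p k) = root T"
    using root_insertion_preserves_root[OF assms] assms(1) by (simp add: rooted_trees_def)
  then show ?thesis
    using insert_at_stats[OF valid below] young_root_insert_at[OF valid below]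
    by (cases "step_at T p k") (simp_all add: tree_stats_def)
qed

lemma card_root_insertions_step:
  assumes "T \<in> rooted_trees (Suc n)"
  shows "card {x \<in> root_insertions T. case_prod (step_at T) x = s}
    = (case s of Step_X \<Rightarrow> 1 | Step_Z \<Rightarrow> n | _ \<Rightarrow> n + improper T)"
proof -
  have "{x \<in> root_insertions T. case_prod (step_at T) x = s}
      = {(p, k). valid_at T p k \<and> step_at T p k = s} - {([], New_Root)}"
    by (auto simp: root_insertions_def)
  moreover have "([], New_Root) \<in> {(p, k). valid_at T p k \<and> step_at T p k = s} \<longleftrightarrow> s = Step_Y"
    by (cases T) auto
  ultimately show ?thesis
    using step_count_values[of T] rooted_trees_length[OF assms]
    by (cases s) (simp_all add: step_count_def finite_valid_at)
qed

lemma card_root_insertions_stats: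
  assumes "T \<in> rooted_trees (Suc n)"
  shows "card {(p, k). (p, k) \<in> root_insertions T \<and> tree_stats (insert_at (Suc (Suc n)) T p k) = s}
    = (if step_shift Step_X (tree_stats T) = s then 1 else 0)
    + (if tree_stats T = s then n else 0)
    + (if step_shift Step_Y (tree_stats T) = s then n + improper T else 0)
    + (if step_shift Step_T (tree_stats T) = s then n + improper T else 0)"
proof -
  have "card {(p, k). (p, k) \<in> root_insertions T \<and> tree_stats (insert_at (Suc (Suc n)) T p k) = s}
      = card {x \<in> root_insertions T. step_shift (case_prod (step_at T) x) (tree_stats T) = s}"
    using tree_stats_insert_at[OF assms] by (intro arg_cong[where f = card]) auto
  also have "\<dots> = (\<Sum>c\<in>{Step_X, Step_Z, Step_Y, Step_T}. if step_shift c (tree_stats T) = s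
      then card {x \<in> root_insertions T. case_prod (step_at T) x = c} else 0)"
    by (rule card_filter_by_class[OF finite_root_insertions]) (auto intro: step.exhaust)
  finally show ?thesis
    by (simp add: card_root_insertions_step[OF assms])
qed

definition otree_count :: "nat \<Rightarrow> nat \<Rightarrow> nat \<Rightarrow> nat \<Rightarrow> nat" where
  "otree_count n k a d = card {T \<in> rooted_trees (Suc n). tree_stats T = (k, a, d)}"

lemma otree_count_Suc:
  "otree_count (Suc n) k a d =
      (if 0 < a then otree_count n k (a - 1) d else 0) + n * otree_count n k a d
    + (if 0 < k then (n + k - 1) * otree_count n (k - 1) a d else 0)
    + (if 0 < d then (n + k) * otree_count n k a (d - 1) else 0)"
proof -
  let ?A = "rooted_trees (Suc n)" and ?s = "(k, a, d)"
  let ?F = "\<lambda>(T, p, k). insert_at (Suc (Suc n)) T p k"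
  let ?B = "\<lambda>T. {(p, k'). (p, k') \<in> root_insertions T \<and> tree_stats (insert_at (Suc (Suc n)) T p k') = ?s}"
  have "bij_betw ?F {x \<in> (SIGMA T:?A. root_insertions T). tree_stats (?F x) = ?s}
      {Y \<in> rooted_trees (Suc (Suc n)). tree_stats Y = ?s}"
    by (rule bij_betw_Collect[OF insert_at_bij_betw]) simp
  then have "otree_count (Suc n) k a d = card {x \<in> (SIGMA T:?A. root_insertions T). tree_stats (?F x) = ?s}"
    by (simp add: otree_count_def bij_betw_same_card)
  also have "{x \<in> (SIGMA T:?A. root_insertions T). tree_stats (?F x) = ?s} = (SIGMA T:?A. ?B T)"
    by auto
  also have "card (SIGMA T:?A. ?B T) = (\<Sum>T\<in>?A. card (?B T))"
    using finite_rooted_trees finite_root_insertions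
    by (intro card_SigmaI) (auto intro: rev_finite_subset)
  also have "\<dots> = (\<Sum>T\<in>?A. (if tree_stats T = (k, a - 1, d) \<and> 0 < a then 1 else 0)
    + (if tree_stats T = ?s then n else 0)
    + (if tree_stats T = (k - 1, a, d) \<and> 0 < k then n + k - 1 else 0)
    + (if tree_stats T = (k, a, d - 1) \<and> 0 < d then n + k else 0))"
    by (intro sum.cong refl, subst card_root_insertions_stats) (auto simp: tree_stats_def)
  also have "\<dots> = (if 0 < a then otree_count n k (a - 1) d else 0) + n * otree_count n k a d
    + (if 0 < k then (n + k - 1) * otree_count n (k - 1) a d else 0)
    + (if 0 < d then (n + k) * otree_count n k a (d - 1) else 0)"
    using finite_rooted_trees[of n]
    by (cases "0 < a"; cases "0 < k"; cases "0 < d")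
      (simp_all add: sum.distrib sum_if_eq_card otree_count_def mult.commute)
  finally show ?thesis .
qed

lemma otree_count_0: "otree_count 0 k a d = (if k = 0 \<and> a = 0 \<and> d = 0 then 1 else 0)"
proof -
  have "tree_stats (Node 1 []) = (0, 0, 0)"
    by (simp add: tree_stats_def improper_Node_count eld_Node young_root_Node)
  then have "{T \<in> rooted_trees (Suc 0). tree_stats T = (k, a, d)}
      = (if k = 0 \<and> a = 0 \<and> d = 0 then {Node 1 []} else {})"
    by (auto simp: rooted_trees_1)
  then show ?thesis
    by (simp add: otree_count_def)
qed

lemma rooted_trees_young_root_pos:
  assumes "T \<in> rooted_trees (Suc n)" and "1 \<le> n"
  shows "0 < young_root T"
proof (rule young_root_pos)
  show "kids T \<noteq> []"
    using rooted_trees_length[OF assms(1)] assms(2) by (cases T) auto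
qed

lemma Qnk_eq_otree_count: "1 \<le> n \<Longrightarrow> Qnk n k a d = otree_count n k (Suc a) d"
proof (induction n arbitrary: k a d rule: dec_induct)
  case base
  then show ?case
    by (simp add: Qnk_eq_sum otree_count_Suc[of 0, simplified] otree_count_0)
next
  case (step n)
  have "{T \<in> rooted_trees (Suc n). tree_stats T = (k, 0, d)} = {}"
    using rooted_trees_young_root_pos[OF _ step.hyps(1)] by (fastforce simp: tree_stats_def)
  then have "otree_count n k 0 d = 0"
    unfolding otree_count_def by (metis card.empty)
  then show ?case
    using step.IH by (cases a) (simp_all add: Qnk_Suc[OF step.hyps(1)] otree_count_Suc)
qed

theorem theorem2p1:
  fixes n k a d :: nat
  assumes "1 \<le> n" and "k \<le> n - 1"
  shows "Qnk n k a d = card {T \<in> Otrees (n + 1) k. young_root T - 1 = a \<and> eld T = d}"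
proof -
  have "{T \<in> Otrees (n + 1) k. young_root T - 1 = a \<and> eld T = d}
      = {T \<in> rooted_trees (Suc n). tree_stats T = (k, Suc a, d)}"
    using rooted_trees_young_root_pos[OF _ assms(1)]
    by (auto simp: Otrees_def rooted_trees_def tree_stats_def)
  then show ?thesis
    by (simp add: Qnk_eq_otree_count[OF assms(1)] otree_count_def)
qed

end
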